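(* Let $N^h\ge 2$ be an integer, $h=1/N^h$, and let $\eta_K,\eta_M$ be real parameters. Let $\mathbf{K}_s=\mathbf{K}-\eta_K\mathbf{S}$ and $\mathbf{M}_{gs}=\mathbf{M}+\eta_M\mathbf{S}_g$ be the $(N^h-1)\times(N^h-1)$ matrices described in the context. Then the generalized matrix eigenvalue problem $\mathbf{K}_{s}\mathbf{U}_{gs}=\lambda^h_{gs}\mathbf{M}_{gs}\mathbf{U}_{gs}$ has, for every $j\in\{1,\dots,N^h-1\}$, the eigenpair $(\lambda^h_{gs,j},\mathbf{U}_{gs,j})$ given by \[ \lambda_{gs,j}^h=\frac{12}{h^2}\,\frac{\big(1-2\eta_K+2\eta_K\cos(t_j)\big)\sin^2(t_j/2)}{2+18\eta_M+(1-24\eta_M)\cos(t_j)+6\eta_M\cos(2t_j)},\qquad \mathbf{U}_{gs,j,k}=c_j\sin(k t_j),\quad k=1,\dots,N^h-1, \] where $t_j:=j\pi h$, $\mathbf{U}_{gs,j,k}$ denotes the $k$-th component of $\mathbf{U}_{gs,j}$, and $c_j>0$ is a normalization constant.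
   Context: Setting (linear finite elements, generalized SoftFEM, in 1D): Let $x_k=kh$, $k=0,\dots,N^h$, be a uniform mesh of $[0,1]$. Let $V^h$ be the space of continuous functions on $[0,1]$ that are affine on each $[x_{k-1},x_k]$ and vanish at $0$ and $1$, with hat basis $\phi_k$, $k=1,\dots,N^h-1$, $\phi_k(x_l)=\delta_{kl}$. For $v\in V^h$ and an interior node $x_k$ let $[\![v']\!](x_k)=v'(x_k^-)-v'(x_k^+)$ be the jump of the derivative. Define $a(v,w)=\int_0^1 v'w'\,dx$, $b(v,w)=\int_0^1 vw\,dx$, $s(v,w)=\sum_{k=1}^{N^h-1} h\,[\![v']\!](x_k)[\![w']\!](x_k)$, $s_g(v,w)=\sum_{k=1}^{N^h-1} h^3\,[\![v']\!](x_k)[\![w']\!](x_k)$, and the matrices $\mathbf{K}_{kl}=a(\phi_l,\phi_k)$, $\mathbf{M}_{kl}=b(\phi_l,\phi_k)$, $\mathbf{S}_{kl}=s(\phi_l,\phi_k)$, $(\mathbf{S}_g)_{kl}=s_g(\phi_l,\phi_k)$, $k,l=1,\dots,N^h-1$. Explicitly, $\mathbf{K}=\frac1h\,\mathrm{tridiag}(-1,2,-1)$, $\mathbf{M}=h\,\mathrm{tridiag}(\tfrac16,\tfrac23,\tfrac16)$, $\mathbf{S}=\frac1h$ times the symmetric pentadiagonal matrix with rows $(1,-4,6,-4,1)$ except that the first and last diagonal entries are $5$ (rows truncated at the boundary), and $\mathbf{S}_g=h^2\mathbf{S}$. *)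

theory Defs
  imports Complex_Main
begin

(* Uniform mesh x_k = k h on [0,1], h = 1/N (N = N^h). Matrices are indexed by
   k,l in {1..N-1} and represented as functions nat => nat => real. *)

definition meshsize :: "nat \<Rightarrow> real" where
  "meshsize N = 1 / real N"

definition Kmat :: "nat \<Rightarrow> nat \<Rightarrow> nat \<Rightarrow> real" where
  "Kmat N k l = (if k = l then 2 else if k = l + 1 \<or> l = k + 1 then -1 else 0) / meshsize N"

definition Mmat :: "nat \<Rightarrow> nat \<Rightarrow> nat \<Rightarrow> real" where
  "Mmat N k l = meshsize N * (if k = l then 2/3 else if k = l + 1 \<or> l = k + 1 then 1/6 else 0)"

(* jump of the derivative of the hat function phi_l at node x_i:
   [[phi_l']](x_i) = phi_l'(x_i^-) - phi_l'(x_i^+) *)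
definition hat_jump :: "nat \<Rightarrow> nat \<Rightarrow> nat \<Rightarrow> real" where
  "hat_jump N l i = (if i = l then 2 else if i = l + 1 \<or> l = i + 1 then -1 else 0) / meshsize N"

definition Smat :: "nat \<Rightarrow> nat \<Rightarrow> nat \<Rightarrow> real" where
  "Smat N k l = (\<Sum>i=1..N-1. meshsize N * hat_jump N l i * hat_jump N k i)"

definition Sgmat :: "nat \<Rightarrow> nat \<Rightarrow> nat \<Rightarrow> real" where
  "Sgmat N k l = (\<Sum>i=1..N-1. meshsize N ^ 3 * hat_jump N l i * hat_jump N k i)"

definition Ksmat :: "real \<Rightarrow> nat \<Rightarrow> nat \<Rightarrow> nat \<Rightarrow> real" where
  "Ksmat etaK N k l = Kmat N k l - etaK * Smat N k l"

definition Mgsmat :: "real \<Rightarrow> nat \<Rightarrow> nat \<Rightarrow> nat \<Rightarrow> real" where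
  "Mgsmat etaM N k l = Mmat N k l + etaM * Sgmat N k l"

definition gen_eigenpair ::
  "nat \<Rightarrow> (nat \<Rightarrow> nat \<Rightarrow> real) \<Rightarrow> (nat \<Rightarrow> nat \<Rightarrow> real) \<Rightarrow> real \<Rightarrow> (nat \<Rightarrow> real) \<Rightarrow> bool" where
  "gen_eigenpair N A B lam U \<longleftrightarrow>
     (\<exists>k\<in>{1..N-1}. U k \<noteq> 0) \<and>
     (\<forall>k\<in>{1..N-1}. (\<Sum>l=1..N-1. A k l * U l) = lam * (\<Sum>l=1..N-1. B k l * U l))"

end

theory Submission
  imports Defs
begin

(* K, M and S are built from the tridiagonal Toeplitz matrices tridiag a b (diagonal a,
   off-diagonals b): with T = tridiag 2 (-1), K = T / h, M = h tridiag (2/3) (1/6), and S = T^2 / h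
   because the derivative jump of phi_l at x_i is T_il / h; finally S_g = h^2 S. The sine mode
   u_k = sin(k t_j) vanishes at k = 0 and k = N and satisfies u_(k-1) + u_(k+1) = 2 cos(t_j) u_k,
   so it is an eigenvector of every tridiag a b, with eigenvalue a + 2 b cos(t_j), and hence of
   K_s and M_gs. The generalized eigenvalue is the quotient of the two eigenvalues, brought into
   the stated form by the half- and double-angle formulas. *)

definition tridiag :: "real \<Rightarrow> real \<Rightarrow> nat \<Rightarrow> nat \<Rightarrow> real" where
  "tridiag a b k l = (if k = l then a else if k = l + 1 \<or> l = k + 1 then b else 0)"

definition eigen_eq :: "nat set \<Rightarrow> (nat \<Rightarrow> nat \<Rightarrow> real) \<Rightarrow> real \<Rightarrow> (nat \<Rightarrow> real) \<Rightarrow> bool" where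
  "eigen_eq I A \<alpha> u \<longleftrightarrow> (\<forall>k\<in>I. (\<Sum>l\<in>I. A k l * u l) = \<alpha> * u k)"

definition discrete_mode :: "nat \<Rightarrow> real \<Rightarrow> (nat \<Rightarrow> real) \<Rightarrow> bool" where
  "discrete_mode N C u \<longleftrightarrow>
     u 0 = 0 \<and> u N = 0 \<and> (\<forall>k\<in>{1..N-1}. u (k-1) + u (k+1) = 2 * C * u k)"

lemma tridiag_commute: "tridiag a b l k = tridiag a b k l"
  by (auto simp: tridiag_def)

lemma eigen_eq_add:
  assumes "eigen_eq I A \<alpha> u" and "eigen_eq I B \<beta> u"
  shows "eigen_eq I (\<lambda>k l. A k l + B k l) (\<alpha> + \<beta>) u"
  using assms by (simp add: eigen_eq_def distrib_right sum.distrib)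

lemma eigen_eq_scale:
  assumes "eigen_eq I A \<alpha> u"
  shows "eigen_eq I (\<lambda>k l. c * A k l) (c * \<alpha>) u"
  using assms by (simp add: eigen_eq_def mult.assoc flip: sum_distrib_left)

lemma eigen_eq_square:
  assumes "finite I" and "eigen_eq I A \<alpha> u"
  shows "eigen_eq I (\<lambda>k l. \<Sum>i\<in>I. A k i * A i l) (\<alpha>\<^sup>2) u"
  unfolding eigen_eq_def
proof
  fix k assume k: "k \<in> I"
  have "(\<Sum>l\<in>I. (\<Sum>i\<in>I. A k i * A i l) * u l) = (\<Sum>l\<in>I. \<Sum>i\<in>I. A k i * (A i l * u l))"
    by (simp add: sum_distrib_right mult.assoc)
  also have "\<dots> = (\<Sum>i\<in>I. A k i * (\<Sum>l\<in>I. A i l * u l))"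
    by (subst sum.swap) (simp add: sum_distrib_left)
  also have "\<dots> = \<alpha> * (\<Sum>i\<in>I. A k i * u i)"
    using assms(2) by (simp add: eigen_eq_def sum_distrib_left mult.left_commute)
  also have "\<dots> = \<alpha>\<^sup>2 * u k"
    using assms(2) k by (simp add: eigen_eq_def power2_eq_square)
  finally show "(\<Sum>l\<in>I. (\<Sum>i\<in>I. A k i * A i l) * u l) = \<alpha>\<^sup>2 * u k" .
qed

lemma tridiag_mult_vec:
  fixes u :: "nat \<Rightarrow> real"
  assumes "u 0 = 0" and "u N = 0" and k: "k \<in> {1..N-1}"
  shows "(\<Sum>l=1..N-1. tridiag a b k l * u l) = a * u k + b * (u (k-1) + u (k+1))"
proof -
  have "(\<Sum>l=1..N-1. tridiag a b k l * u l)
      = (\<Sum>l=1..N-1. (if l = k then a * u l else 0) + (if l = k-1 then b * u l else 0)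
            + (if l = k+1 then b * u l else 0))"
    using k by (intro sum.cong) (auto simp: tridiag_def)
  also have "\<dots> = a * u k + b * (u (k-1) + u (k+1))"
    using assms
    by (cases "k = 1"; cases "Suc k = N") (auto simp: sum.distrib sum.delta' algebra_simps)
  finally show ?thesis .
qed

lemma tridiag_eigen_eq:
  assumes "discrete_mode N C u"
  shows "eigen_eq {1..N-1} (tridiag a b) (a + 2 * b * C) u"
  using assms tridiag_mult_vec[of u N] by (simp add: discrete_mode_def eigen_eq_def algebra_simps)

lemma Kmat_eq: "Kmat N = (\<lambda>k l. inverse (meshsize N) * tridiag 2 (-1) k l)"
  by (simp add: fun_eq_iff Kmat_def tridiag_def divide_inverse mult.commute)

lemma Mmat_eq: "Mmat N = (\<lambda>k l. meshsize N * tridiag (2/3) (1/6) k l)"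
  by (simp add: fun_eq_iff Mmat_def tridiag_def)

lemma Smat_eq:
  "Smat N = (\<lambda>k l. inverse (meshsize N) * (\<Sum>i=1..N-1. tridiag 2 (-1) k i * tridiag 2 (-1) i l))"
proof -
  have hj: "hat_jump N l i = inverse (meshsize N) * tridiag 2 (-1) l i" for l i
    by (simp add: hat_jump_def tridiag_def divide_inverse mult.commute)
  show ?thesis
  proof (cases "meshsize N = 0")
    case False
    then have "meshsize N * hat_jump N l i * hat_jump N k i
        = inverse (meshsize N) * (tridiag 2 (-1) k i * tridiag 2 (-1) i l)" for k l i
      by (simp add: hj tridiag_commute[of _ _ l] field_simps power2_eq_square)
    then show ?thesis
      by (simp add: fun_eq_iff Smat_def sum_distrib_left)
  qed (simp add: fun_eq_iff Smat_def)
qed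

lemma Sgmat_eq: "Sgmat N = (\<lambda>k l. (meshsize N)\<^sup>2 * Smat N k l)"
  by (simp add: fun_eq_iff Sgmat_def Smat_def sum_distrib_left power2_eq_square power3_eq_cube
      mult.assoc)

lemma Ksmat_eigen_eq:
  assumes "discrete_mode N C u"
  shows "eigen_eq {1..N-1} (Ksmat etaK N) ((2 - 2*C) * (1 - etaK * (2 - 2*C)) / meshsize N) u"
proof -
  have T: "eigen_eq {1..N-1} (tridiag 2 (-1)) (2 - 2*C) u"
    using tridiag_eigen_eq[OF assms, of 2 "-1"] by simp
  have "Ksmat etaK N = (\<lambda>k l. Kmat N k l + (- etaK) * Smat N k l)"
    by (simp add: fun_eq_iff Ksmat_def)
  moreover have "eigen_eq {1..N-1} (\<lambda>k l. Kmat N k l + (- etaK) * Smat N k l)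
      (inverse (meshsize N) * (2 - 2*C) + (- etaK) * (inverse (meshsize N) * (2 - 2*C)\<^sup>2)) u"
    unfolding Kmat_eq Smat_eq
    by (intro eigen_eq_add eigen_eq_scale eigen_eq_square T) simp
  ultimately show ?thesis
    by (simp add: divide_inverse power2_eq_square algebra_simps)
qed

lemma Mgsmat_eigen_eq:
  assumes "discrete_mode N C u"
  shows "eigen_eq {1..N-1} (Mgsmat etaM N) (meshsize N * ((2 + C) / 3 + etaM * (2 - 2*C)\<^sup>2)) u"
proof -
  have T: "eigen_eq {1..N-1} (tridiag a b) (a + 2 * b * C) u" for a b
    using tridiag_eigen_eq[OF assms] .
  have "Mgsmat etaM N = (\<lambda>k l. Mmat N k l + etaM * ((meshsize N)\<^sup>2 * Smat N k l))"
    by (simp add: fun_eq_iff Mgsmat_def Sgmat_eq)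
  moreover have "eigen_eq {1..N-1} (\<lambda>k l. Mmat N k l + etaM * ((meshsize N)\<^sup>2 * Smat N k l))
      (meshsize N * (2/3 + 2 * (1/6) * C)
        + etaM * ((meshsize N)\<^sup>2 * (inverse (meshsize N) * (2 + 2 * (-1) * C)\<^sup>2))) u"
    unfolding Mmat_eq Smat_eq
    by (intro eigen_eq_add eigen_eq_scale eigen_eq_square T) simp
  moreover have "meshsize N * (2/3 + 2 * (1/6) * C)
        + etaM * ((meshsize N)\<^sup>2 * (inverse (meshsize N) * (2 + 2 * (-1) * C)\<^sup>2))
      = meshsize N * ((2 + C) / 3 + etaM * (2 - 2*C)\<^sup>2)"
    by (cases "meshsize N = 0") (simp_all add: field_simps power2_eq_square)
  ultimately show ?thesis
    by simp
qed

lemma gen_eigenpair_of_eigen_eq: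
  assumes "eigen_eq {1..N-1} A \<alpha> U" and "eigen_eq {1..N-1} B \<beta> U" and "\<beta> \<noteq> 0"
    and "\<exists>k\<in>{1..N-1}. U k \<noteq> 0"
  shows "gen_eigenpair N A B (\<alpha> / \<beta>) U"
  using assms by (simp add: gen_eigenpair_def eigen_eq_def)

lemma softfem_denominator_eq:
  fixes t etaM :: real
  shows "2 + 18 * etaM + (1 - 24 * etaM) * cos t + 6 * etaM * cos (2 * t)
     = 3 * ((2 + cos t) / 3 + etaM * (2 - 2 * cos t)\<^sup>2)"
  unfolding cos_double_cos by (simp add: power2_eq_square algebra_simps)

lemma softfem_eigenvalue_eq:
  fixes h t etaK etaM :: real
  assumes "h \<noteq> 0" and "2 + 18 * etaM + (1 - 24 * etaM) * cos t + 6 * etaM * cos (2 * t) \<noteq> 0"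
  shows "12 / h^2 * ((1 - 2 * etaK + 2 * etaK * cos t) * (sin (t / 2))^2)
           / (2 + 18 * etaM + (1 - 24 * etaM) * cos t + 6 * etaM * cos (2 * t))
         = (2 - 2 * cos t) * (1 - etaK * (2 - 2 * cos t)) / h
           / (h * ((2 + cos t) / 3 + etaM * (2 - 2 * cos t)\<^sup>2))"
proof -
  define D where "D = (2 + cos t) / 3 + etaM * (2 - 2 * cos t)\<^sup>2"
  have sin_half: "(sin (t / 2))^2 = (1 - cos t) / 2"
    using cos_double_sin[of "t / 2"] by simp
  have "3 * D \<noteq> 0"
    using assms(2) unfolding softfem_denominator_eq D_def .
  then have "D \<noteq> 0"
    by simp
  define Y where "Y = (1 - 2 * etaK + 2 * etaK * cos t) * ((1 - cos t) / 2)"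
  have "(2 - 2 * cos t) * (1 - etaK * (2 - 2 * cos t)) = 4 * Y"
    unfolding Y_def by (simp add: field_simps)
  with \<open>D \<noteq> 0\<close> show ?thesis
    using assms(1) unfolding softfem_denominator_eq D_def[symmetric] sin_half Y_def[symmetric]
    by (simp add: field_simps power2_eq_square)
qed

lemma sin_mult_recurrence:
  assumes "k \<ge> 1"
  shows "sin (real (k-1) * t) + sin (real (k+1) * t) = 2 * cos t * sin (real k * t)"
proof -
  have "real (k-1) = real k - 1" using assms by simp
  then show ?thesis by (simp add: algebra_simps sin_add sin_diff)
qed

lemma sin_discrete_mode:
  assumes "sin (real N * t) = 0"
  shows "discrete_mode N (cos t) (\<lambda>k. c * sin (real k * t))"
  unfolding discrete_mode_def
  using assms sin_mult_recurrence[of _ t] by (simp flip: distrib_left)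

lemma sine_mode_angle:
  assumes "j \<in> {1..N-1}"
  defines "t \<equiv> real j * pi * meshsize N"
  shows "0 < t" and "t < pi" and "sin (real N * t) = 0"
proof -
  have t_eq: "t = pi * (real j / real N)" and ratio: "0 < real j / real N" "real j / real N < 1"
    using assms by (auto simp: t_def meshsize_def)
  show "0 < t" "t < pi"
    unfolding t_eq using mult_pos_pos[OF pi_gt_zero ratio(1)]
      mult_strict_left_mono[OF ratio(2) pi_gt_zero] by simp_all
  show "sin (real N * t) = 0"
    using assms by (simp add: t_def meshsize_def)
qed

lemma softfem_sine_eigenpair:
  fixes t etaK etaM c :: real
  assumes "N \<ge> 2" and "0 < t" and "t < pi" and "sin (real N * t) = 0" and "c > 0"
    and den: "2 + 18 * etaM + (1 - 24 * etaM) * cos t + 6 * etaM * cos (2 * t) \<noteq> 0"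
  shows "gen_eigenpair N (Ksmat etaK N) (Mgsmat etaM N)
           (12 / (meshsize N)^2 * ((1 - 2 * etaK + 2 * etaK * cos t) * (sin (t / 2))^2)
             / (2 + 18 * etaM + (1 - 24 * etaM) * cos t + 6 * etaM * cos (2 * t)))
           (\<lambda>k. c * sin (real k * t))"
proof -
  have h_pos: "meshsize N > 0"
    using assms(1) by (simp add: meshsize_def)
  have "(2 + cos t) / 3 + etaM * (2 - 2 * cos t)\<^sup>2 \<noteq> 0"
    using den unfolding softfem_denominator_eq by (metis mult_zero_right)
  with h_pos have "meshsize N * ((2 + cos t) / 3 + etaM * (2 - 2 * cos t)\<^sup>2) \<noteq> 0"
    by simp
  moreover have "\<exists>k\<in>{1..N-1}. c * sin (real k * t) \<noteq> 0"
    using assms(1-3,5) sin_gt_zero[of t] by (intro bexI[of _ 1]) auto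
  moreover have "discrete_mode N (cos t) (\<lambda>k. c * sin (real k * t))"
    by (rule sin_discrete_mode[OF assms(4)])
  ultimately have "gen_eigenpair N (Ksmat etaK N) (Mgsmat etaM N)
      ((2 - 2 * cos t) * (1 - etaK * (2 - 2 * cos t)) / meshsize N
        / (meshsize N * ((2 + cos t) / 3 + etaM * (2 - 2 * cos t)\<^sup>2)))
      (\<lambda>k. c * sin (real k * t))"
    by (intro gen_eigenpair_of_eigen_eq Ksmat_eigen_eq Mgsmat_eigen_eq)
  then show ?thesis
    unfolding softfem_eigenvalue_eq[OF h_pos[THEN less_imp_neq, symmetric] den] .
qed

theorem lemma1:
  fixes N :: nat and etaK etaM :: real
  assumes "N \<ge> 2"
  shows "\<forall>j\<in>{1..N-1}. \<forall>c::real. c > 0 \<longrightarrow>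
    (let h = meshsize N; t = real j * pi * h;
         den = 2 + 18 * etaM + (1 - 24 * etaM) * cos t + 6 * etaM * cos (2 * t)
     in den \<noteq> 0 \<longrightarrow>
        gen_eigenpair N (Ksmat etaK N) (Mgsmat etaM N)
          (12 / h^2 * ((1 - 2 * etaK + 2 * etaK * cos t) * (sin (t / 2))^2) / den)
          (\<lambda>k. c * sin (real k * t)))"
  using sine_mode_angle softfem_sine_eigenpair[OF assms] by (simp add: Let_def)

end
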